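(* Let $\rho$ be an $n$-qubit symmetric state and $\mathcal S$ a collection of subsets of $[n]$ such that the hypergraph $([n],\mathcal S)$ is connected. Then every $\sigma\in\mathcal C(\rho,\mathcal S)$ is a symmetric state.
   Context: Let $[n]=\{1,\dots,n\}$, $\mathcal H_{[n]}=(\mathbb C^2)^{\otimes n}$, and for $S\subseteq[n]$ let $\rho_S$ be the partial trace of $\rho$ over qubits outside $S$. $\mathcal C(\rho,\mathcal S)=\{\sigma\text{ density matrix on }\mathcal H_{[n]}:\sigma_S=\rho_S\ \forall S\in\mathcal S\}$. A state is symmetric if its range is contained in the subspace of vectors invariant under swapping any two qubits. The hypergraph $([n],\mathcal S)$ is connected if for every partition of $[n]$ into nonempty sets $X,Y$ some $S\in\mathcal S$ intersects both $X$ and $Y$. *)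

theory Defs
  imports Complex_Main "HOL-Library.Complex_Order" "HOL-Combinatorics.Transposition"
begin

text \<open>Computational basis of (C^2)^{\<otimes>n}: a basis vector |x_1...x_n> is encoded by
  the set of qubits in state |1>, i.e. by a subset of {1..n}.\<close>

type_synonym qop = "nat set \<Rightarrow> nat set \<Rightarrow> complex"
type_synonym qvec = "nat set \<Rightarrow> complex"

definition basis_idx :: "nat \<Rightarrow> nat set set" where
  "basis_idx n = Pow {1..n}"

definition apply_op :: "nat \<Rightarrow> qop \<Rightarrow> qvec \<Rightarrow> qvec" where
  "apply_op n M v = (\<lambda>x. \<Sum>y\<in>basis_idx n. M x y * v y)"

definition density_matrix :: "nat \<Rightarrow> qop \<Rightarrow> bool" where
  "density_matrix n M \<longleftrightarrow>
     (\<forall>x\<in>basis_idx n. \<forall>y\<in>basis_idx n. M y x = cnj (M x y)) \<and>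
     (\<forall>v. 0 \<le> (\<Sum>x\<in>basis_idx n. \<Sum>y\<in>basis_idx n. cnj (v x) * M x y * v y)) \<and>
     (\<Sum>x\<in>basis_idx n. M x x) = 1"

definition partial_trace :: "nat \<Rightarrow> nat set \<Rightarrow> qop \<Rightarrow> qop" where
  "partial_trace n S M = (\<lambda>a b. \<Sum>c\<in>Pow ({1..n} - S). M (a \<union> c) (b \<union> c))"

definition compatible_states :: "nat \<Rightarrow> qop \<Rightarrow> nat set set \<Rightarrow> qop set" where
  "compatible_states n \<rho> \<SS> = {\<sigma>. density_matrix n \<sigma> \<and>
     (\<forall>S\<in>\<SS>. \<forall>a\<in>Pow S. \<forall>b\<in>Pow S. partial_trace n S \<sigma> a b = partial_trace n S \<rho> a b)}"

definition swap_invariant :: "nat \<Rightarrow> qvec \<Rightarrow> bool" where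
  "swap_invariant n v \<longleftrightarrow>
     (\<forall>i\<in>{1..n}. \<forall>j\<in>{1..n}. \<forall>x\<in>basis_idx n. v (transpose i j ` x) = v x)"

definition symmetric_state :: "nat \<Rightarrow> qop \<Rightarrow> bool" where
  "symmetric_state n M \<longleftrightarrow> density_matrix n M \<and>
     (\<forall>v. swap_invariant n (apply_op n M v))"

definition hypergraph_connected :: "nat \<Rightarrow> nat set set \<Rightarrow> bool" where
  "hypergraph_connected n \<SS> \<longleftrightarrow>
     (\<forall>X Y. X \<noteq> {} \<longrightarrow> Y \<noteq> {} \<longrightarrow> X \<inter> Y = {} \<longrightarrow> X \<union> Y = {1..n} \<longrightarrow>
        (\<exists>S\<in>\<SS>. S \<inter> X \<noteq> {} \<and> S \<inter> Y \<noteq> {}))"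

end

theory Submission
  imports Defs
begin

text \<open>Fix a hyperedge S containing qubits i and j, and let \<tau> swap them. For every basis
  vector z, the number <e(z) - e(\<tau> z), \<sigma> (e(z) - e(\<tau> z))> is nonnegative since \<sigma> is
  positive semidefinite. As \<tau> only moves qubits inside S, summing these numbers over the
  configurations outside S gives the corresponding number for the marginal on S, which is the
  same for \<sigma> and \<rho> and vanishes because \<rho> is symmetric. So each of them vanishes, which
  forces \<sigma> (e(z) - e(\<tau> z)) = 0: \<sigma> is invariant under \<tau>. The swaps inside hyperedges generate
  all transpositions because the hypergraph is connected.\<close>

definition quad_form :: "'a set \<Rightarrow> ('a \<Rightarrow> 'a \<Rightarrow> complex) \<Rightarrow> ('a \<Rightarrow> complex) \<Rightarrow> complex" where
  "quad_form B M v = (\<Sum>x\<in>B. \<Sum>y\<in>B. cnj (v x) * M x y * v y)"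

definition basis_diff :: "'a \<Rightarrow> 'a \<Rightarrow> 'a \<Rightarrow> complex" where
  "basis_diff x y = (\<lambda>b. if b = x then 1 else if b = y then -1 else 0)"

definition swap_defect :: "('a \<Rightarrow> 'a \<Rightarrow> complex) \<Rightarrow> 'a \<Rightarrow> 'a \<Rightarrow> complex" where
  "swap_defect M x y = M x x - M x y - M y x + M y y"

lemma nonneg_quadratic_imp_linear_coeff_zero:
  fixes b c :: real
  assumes c: "0 \<le> c" and nonneg: "\<And>t. 0 \<le> 2*t*b + t^2*c"
  shows "b = 0"
proof (rule ccontr)
  assume "b \<noteq> 0"
  define t where "t = - b / (c + 1)"
  have tc: "t * (c + 1) = - b" using c by (simp add: t_def)
  have "(2*t*b + t^2*c) * (c + 1)^2 = 2*b*(t*(c + 1))*(c + 1) + (t*(c + 1))^2*c"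
    by (simp add: algebra_simps power2_eq_square)
  also have "\<dots> = - (b^2 * (c + 2))"
    unfolding tc by (simp add: algebra_simps power2_eq_square)
  finally have "0 \<le> - (b^2 * (c + 2))"
    using nonneg[of t] by (metis zero_le_mult_iff zero_le_power2)
  moreover have "0 < b^2 * (c + 2)" using \<open>b \<noteq> 0\<close> c by simp
  ultimately show False by linarith
qed

lemma psd_quad_form_zero_imp_kernel:
  fixes M :: "'a \<Rightarrow> 'a \<Rightarrow> complex"
  assumes fin: "finite B"
    and herm: "\<forall>a\<in>B. \<forall>b\<in>B. M b a = cnj (M a b)"
    and psd: "\<forall>v. 0 \<le> quad_form B M v"
    and zero: "quad_form B M w = 0"
    and a: "a \<in> B"
  shows "(\<Sum>b\<in>B. M a b * w b) = 0"
proof -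
  define u where "u = (\<lambda>a. \<Sum>b\<in>B. M a b * w b)"
  define N where "N = (\<Sum>a\<in>B. cnj (u a) * u a)"
  have uMw: "(\<Sum>x\<in>B. \<Sum>y\<in>B. cnj (u x) * M x y * w y) = N"
    unfolding N_def u_def by (simp add: sum_distrib_left mult.assoc)
  have "(\<Sum>x\<in>B. \<Sum>y\<in>B. cnj (w x) * M x y * u y) = (\<Sum>y\<in>B. \<Sum>x\<in>B. cnj (w x) * M x y * u y)"
    by (rule sum.swap)
  also have "\<dots> = (\<Sum>y\<in>B. u y * cnj (\<Sum>x\<in>B. M y x * w x))"
  proof (intro sum.cong refl)
    fix y assume "y \<in> B"
    have "cnj (\<Sum>x\<in>B. M y x * w x) = (\<Sum>x\<in>B. cnj (w x) * M x y)"
    proof (unfold cnj_sum, intro sum.cong refl)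
      fix x assume "x \<in> B"
      then have "M x y = cnj (M y x)" using herm \<open>y \<in> B\<close> by blast
      then show "cnj (M y x * w x) = cnj (w x) * M x y" by simp
    qed
    then show "(\<Sum>x\<in>B. cnj (w x) * M x y * u y) = u y * cnj (\<Sum>x\<in>B. M y x * w x)"
      by (simp add: sum_distrib_left sum_distrib_right mult_ac)
  qed
  also have "\<dots> = N"
    unfolding N_def u_def by (simp add: mult.commute)
  finally have wMu: "(\<Sum>x\<in>B. \<Sum>y\<in>B. cnj (w x) * M x y * u y) = N" .
  define n where "n = (\<Sum>a\<in>B. (cmod (u a))^2)"
  have N: "N = of_real n"
    unfolding N_def n_def of_real_sum by (intro sum.cong refl) (simp only: complex_norm_square mult.commute)
  \<comment> \<open>Perturbing w in the direction u = M w changes the form by 2 t |u|^2 + O(t^2), which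
    is negative for small t of suitable sign unless u = 0.\<close>
  have "quad_form B M (\<lambda>a. w a + of_real t * u a)
      = 2 * of_real (t * n) + (of_real t)^2 * quad_form B M u" for t
  proof -
    have "quad_form B M (\<lambda>a. w a + of_real t * u a) =
        (\<Sum>x\<in>B. \<Sum>y\<in>B. cnj (w x) * M x y * w y + of_real t * (cnj (w x) * M x y * u y)
          + of_real t * (cnj (u x) * M x y * w y) + (of_real t)^2 * (cnj (u x) * M x y * u y))"
      unfolding quad_form_def by (intro sum.cong refl) (simp add: algebra_simps power2_eq_square)
    also have "\<dots> = quad_form B M w + of_real t * (\<Sum>x\<in>B. \<Sum>y\<in>B. cnj (w x) * M x y * u y)
          + of_real t * (\<Sum>x\<in>B. \<Sum>y\<in>B. cnj (u x) * M x y * w y) + (of_real t)^2 * quad_form B M u"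
      unfolding quad_form_def by (simp add: sum.distrib sum_distrib_left)
    also have "\<dots> = 2 * of_real (t * n) + (of_real t)^2 * quad_form B M u"
      unfolding zero uMw wMu N by simp
    finally show ?thesis .
  qed
  then have "0 \<le> 2*t*n + t^2 * Re (quad_form B M u)" for t
    using psd[rule_format, of "\<lambda>a. w a + of_real t * u a"] by (simp add: less_eq_complex_def)
  moreover have "0 \<le> Re (quad_form B M u)" using psd by (simp add: less_eq_complex_def)
  ultimately have "n = 0" using nonneg_quadratic_imp_linear_coeff_zero by blast
  then have "cmod (u a) = 0" using fin a by (simp add: n_def sum_nonneg_eq_0_iff)
  then show ?thesis by (simp add: u_def)
qed

lemma sum_mult_basis_diff:
  assumes "finite B" "x \<in> B" "y \<in> B" "x \<noteq> y"
  shows "(\<Sum>b\<in>B. M a b * basis_diff x y b) = M a x - M a y"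
proof -
  have "(\<Sum>b\<in>B. M a b * basis_diff x y b) = (\<Sum>b\<in>{x, y}. M a b * basis_diff x y b)"
    using assms by (intro sum.mono_neutral_right) (auto simp: basis_diff_def)
  then show ?thesis using assms(4) by (simp add: basis_diff_def)
qed

lemma quad_form_basis_diff:
  assumes "finite B" "x \<in> B" "y \<in> B" "x \<noteq> y"
  shows "quad_form B M (basis_diff x y) = swap_defect M x y"
proof -
  have "quad_form B M (basis_diff x y) = (\<Sum>a\<in>B. cnj (basis_diff x y a) * (M a x - M a y))"
    unfolding quad_form_def
    by (intro sum.cong refl) (simp add: sum_mult_basis_diff[OF assms, symmetric] sum_distrib_left mult.assoc)
  also have "\<dots> = (\<Sum>a\<in>{x, y}. cnj (basis_diff x y a) * (M a x - M a y))"
    using assms by (intro sum.mono_neutral_right) (auto simp: basis_diff_def)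
  also have "\<dots> = swap_defect M x y"
    using assms(4) by (simp add: swap_defect_def basis_diff_def)
  finally show ?thesis .
qed

lemma psd_swap_defect_nonneg:
  assumes "finite B" "x \<in> B" "y \<in> B" "\<forall>v. 0 \<le> quad_form B M v"
  shows "0 \<le> swap_defect M x y"
proof (cases "x = y")
  case False
  then show ?thesis using assms quad_form_basis_diff[OF assms(1-3) False] by metis
qed (simp add: swap_defect_def)

lemma psd_swap_defect_zero_imp_columns_eq:
  assumes fin: "finite B"
    and herm: "\<forall>a\<in>B. \<forall>b\<in>B. M b a = cnj (M a b)"
    and psd: "\<forall>v. 0 \<le> quad_form B M v"
    and "x \<in> B" "y \<in> B" "z \<in> B"
    and defect: "swap_defect M y z = 0"
  shows "M x y = M x z"
proof (cases "y = z")
  case False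
  then have "quad_form B M (basis_diff y z) = 0"
    using quad_form_basis_diff[OF fin \<open>y \<in> B\<close> \<open>z \<in> B\<close>] defect by simp
  then have "(\<Sum>b\<in>B. M x b * basis_diff y z b) = 0"
    using psd_quad_form_zero_imp_kernel[OF fin herm psd _ \<open>x \<in> B\<close>] by blast
  then show ?thesis
    using sum_mult_basis_diff[OF fin \<open>y \<in> B\<close> \<open>z \<in> B\<close> False, where M = M and a = x] by simp
qed simp

lemma density_matrix_hermitian:
  "density_matrix n M \<Longrightarrow> \<forall>x\<in>basis_idx n. \<forall>y\<in>basis_idx n. M y x = cnj (M x y)"
  unfolding density_matrix_def by blast

lemma density_matrix_psd:
  "density_matrix n M \<Longrightarrow> \<forall>v. 0 \<le> quad_form (basis_idx n) M v"
  unfolding density_matrix_def quad_form_def by blast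

lemma finite_basis_idx: "finite (basis_idx n)"
  by (simp add: basis_idx_def)

lemma transpose_image_in_basis_idx:
  "i \<in> {1..n} \<Longrightarrow> j \<in> {1..n} \<Longrightarrow> x \<in> basis_idx n \<Longrightarrow> transpose i j ` x \<in> basis_idx n"
  using image_mono[of x "{1..n}" "transpose i j"] transpose_image_eq[of i "{1..n}" j]
  by (simp add: basis_idx_def)

lemma transpose_image_Un_disjoint:
  "i \<in> S \<Longrightarrow> j \<in> S \<Longrightarrow> c \<inter> S = {} \<Longrightarrow> transpose i j ` (a \<union> c) = transpose i j ` a \<union> c"
proof -
  assume "i \<in> S" "j \<in> S" "c \<inter> S = {}"
  then have "transpose i j ` c = c" by (intro transpose_image_eq) auto
  then show ?thesis by (simp add: image_Un)
qed

definition rows_swap_invariant :: "nat \<Rightarrow> qop \<Rightarrow> nat \<Rightarrow> nat \<Rightarrow> bool" where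
  "rows_swap_invariant n M i j \<longleftrightarrow>
     (\<forall>x\<in>basis_idx n. \<forall>y\<in>basis_idx n. M (transpose i j ` x) y = M x y)"

lemma symmetric_state_iff_rows_swap_invariant:
  "symmetric_state n M \<longleftrightarrow>
     density_matrix n M \<and> (\<forall>i\<in>{1..n}. \<forall>j\<in>{1..n}. rows_swap_invariant n M i j)"
proof (intro iffI conjI ballI)
  fix i j assume sym: "symmetric_state n M" and "i \<in> {1..n}" "j \<in> {1..n}"
  show "rows_swap_invariant n M i j" unfolding rows_swap_invariant_def
  proof (intro ballI)
    fix x y assume "x \<in> basis_idx n" "y \<in> basis_idx n"
    define e where "e = (\<lambda>z. if z = y then 1 else 0 :: complex)"
    have "swap_invariant n (apply_op n M e)" using sym by (simp add: symmetric_state_def)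
    then have "apply_op n M e (transpose i j ` x) = apply_op n M e x"
      using \<open>i \<in> {1..n}\<close> \<open>j \<in> {1..n}\<close> \<open>x \<in> basis_idx n\<close> by (simp add: swap_invariant_def)
    moreover have "apply_op n M e z = M z y" for z
      using \<open>y \<in> basis_idx n\<close> finite_basis_idx[of n] by (simp add: apply_op_def e_def if_distrib cong: if_cong)
    ultimately show "M (transpose i j ` x) y = M x y" by simp
  qed
qed (auto simp: symmetric_state_def swap_invariant_def apply_op_def rows_swap_invariant_def
          intro!: sum.cong)

lemma cols_swap_invariant:
  assumes "density_matrix n M" "rows_swap_invariant n M i j" "i \<in> {1..n}" "j \<in> {1..n}"
    "x \<in> basis_idx n" "y \<in> basis_idx n"
  shows "M x (transpose i j ` y) = M x y"
proof -
  have herm: "\<forall>x\<in>basis_idx n. \<forall>y\<in>basis_idx n. M y x = cnj (M x y)"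
    using density_matrix_hermitian[OF assms(1)] .
  have "M x (transpose i j ` y) = cnj (M (transpose i j ` y) x)"
    using herm transpose_image_in_basis_idx[OF assms(3,4,6)] assms(5) by blast
  also have "\<dots> = cnj (M y x)" using assms(2,5,6) by (simp add: rows_swap_invariant_def)
  also have "\<dots> = M x y" using bspec[OF bspec[OF herm assms(5)] assms(6)] by simp
  finally show ?thesis .
qed

lemma swap_defect_eq_0_of_rows_swap_invariant:
  assumes "density_matrix n M" "rows_swap_invariant n M i j" "i \<in> {1..n}" "j \<in> {1..n}"
    "x \<in> basis_idx n"
  shows "swap_defect M x (transpose i j ` x) = 0"
  using assms cols_swap_invariant[OF assms(1-4)] transpose_image_in_basis_idx[OF assms(3-5)]
  by (simp add: swap_defect_def rows_swap_invariant_def)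

lemma partial_trace_swap_defect:
  assumes "S \<subseteq> {1..n}" "i \<in> S" "j \<in> S" "a \<subseteq> S"
  shows "swap_defect (partial_trace n S M) a (transpose i j ` a)
       = (\<Sum>c\<in>Pow ({1..n} - S). swap_defect M (a \<union> c) (transpose i j ` (a \<union> c)))"
proof -
  have "transpose i j ` (a \<union> c) = transpose i j ` a \<union> c" if "c \<in> Pow ({1..n} - S)" for c
    using that assms by (intro transpose_image_Un_disjoint) auto
  then show ?thesis
    unfolding swap_defect_def partial_trace_def by (simp add: sum.distrib sum_subtractf)
qed

lemma swap_defect_eq_0_of_marginal:
  assumes sym: "symmetric_state n \<rho>" and ds: "density_matrix n \<sigma>"
    and S: "S \<subseteq> {1..n}" and ij: "i \<in> S" "j \<in> S"
    and marginal: "\<forall>a\<in>Pow S. \<forall>b\<in>Pow S. partial_trace n S \<sigma> a b = partial_trace n S \<rho> a b"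
    and z: "z \<in> basis_idx n"
  shows "swap_defect \<sigma> z (transpose i j ` z) = 0"
proof -
  let ?C = "Pow ({1..n} - S)" and ?\<tau> = "(`) (transpose i j)"
  have i: "i \<in> {1..n}" and j: "j \<in> {1..n}" using S ij by auto
  have \<rho>_density: "density_matrix n \<rho>" and \<rho>_rows: "rows_swap_invariant n \<rho> i j"
    using symmetric_state_iff_rows_swap_invariant[THEN iffD1, OF sym] i j by auto
  define a where "a = z \<inter> S"
  have a: "a \<subseteq> S" by (simp add: a_def)
  have \<tau>a: "?\<tau> a \<subseteq> S"
    using image_mono[OF a, of "transpose i j"] transpose_image_eq[of i S j] ij by simp
  have in_B: "a \<union> c \<in> basis_idx n" if "c \<in> ?C" for c
    using that z S by (auto simp: a_def basis_idx_def)
  have "(\<Sum>c\<in>?C. swap_defect \<sigma> (a \<union> c) (?\<tau> (a \<union> c)))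
      = swap_defect (partial_trace n S \<sigma>) a (?\<tau> a)"
    using partial_trace_swap_defect[OF S ij a] by simp
  also have "\<dots> = swap_defect (partial_trace n S \<rho>) a (?\<tau> a)"
    using marginal a \<tau>a unfolding swap_defect_def by simp
  also have "\<dots> = (\<Sum>c\<in>?C. swap_defect \<rho> (a \<union> c) (?\<tau> (a \<union> c)))"
    using partial_trace_swap_defect[OF S ij a] .
  also have "\<dots> = 0"
    using swap_defect_eq_0_of_rows_swap_invariant[OF \<rho>_density \<rho>_rows i j in_B] by simp
  finally have sum_zero: "(\<Sum>c\<in>?C. swap_defect \<sigma> (a \<union> c) (?\<tau> (a \<union> c))) = 0" .
  have nonneg: "0 \<le> swap_defect \<sigma> (a \<union> c) (?\<tau> (a \<union> c))" if "c \<in> ?C" for c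
    using psd_swap_defect_nonneg[OF finite_basis_idx in_B[OF that]
        transpose_image_in_basis_idx[OF i j in_B[OF that]] density_matrix_psd[OF ds]] .
  have "\<forall>c\<in>?C. swap_defect \<sigma> (a \<union> c) (?\<tau> (a \<union> c)) = 0"
    using sum_nonneg_eq_0_iff[OF _ nonneg, of ?C] sum_zero by simp
  moreover have "z - S \<in> ?C" using z by (auto simp: basis_idx_def)
  ultimately have "swap_defect \<sigma> (a \<union> (z - S)) (?\<tau> (a \<union> (z - S))) = 0" by blast
  moreover have "a \<union> (z - S) = z" by (auto simp: a_def)
  ultimately show ?thesis by simp
qed

lemma rows_swap_invariant_of_marginal:
  assumes sym: "symmetric_state n \<rho>" and ds: "density_matrix n \<sigma>"
    and S: "S \<subseteq> {1..n}" and ij: "i \<in> S" "j \<in> S"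
    and marginal: "\<forall>a\<in>Pow S. \<forall>b\<in>Pow S. partial_trace n S \<sigma> a b = partial_trace n S \<rho> a b"
  shows "rows_swap_invariant n \<sigma> i j"
  unfolding rows_swap_invariant_def
proof (intro ballI)
  let ?B = "basis_idx n" and ?\<tau> = "(`) (transpose i j)"
  fix x y assume x: "x \<in> ?B" and y: "y \<in> ?B"
  have \<tau>B: "?\<tau> z \<in> ?B" if "z \<in> ?B" for z
    using transpose_image_in_basis_idx[OF _ _ that] S ij by blast
  have herm: "\<forall>x\<in>?B. \<forall>y\<in>?B. \<sigma> y x = cnj (\<sigma> x y)" using density_matrix_hermitian[OF ds] .
  have cols: "\<sigma> y (?\<tau> x) = \<sigma> y x"
    using psd_swap_defect_zero_imp_columns_eq[OF finite_basis_idx herm density_matrix_psd[OF ds]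
        y x \<tau>B[OF x] swap_defect_eq_0_of_marginal[OF sym ds S ij marginal x]] by simp
  have "\<sigma> (?\<tau> x) y = cnj (\<sigma> y (?\<tau> x))" using herm \<tau>B[OF x] y by blast
  also have "\<dots> = cnj (\<sigma> y x)" using cols by simp
  also have "\<dots> = \<sigma> x y" using bspec[OF bspec[OF herm x] y] by simp
  finally show "\<sigma> (?\<tau> x) y = \<sigma> x y" .
qed

lemma equiv_rows_swap_invariant:
  "equiv {1..n} {(i, j). i \<in> {1..n} \<and> j \<in> {1..n} \<and> rows_swap_invariant n M i j}"
  (is "equiv _ ?r")
proof (rule equivI)
  show "refl_on {1..n} ?r" by (auto simp: refl_on_def rows_swap_invariant_def)
  show "sym ?r" by (auto simp: sym_def rows_swap_invariant_def transpose_commute)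
  show "trans ?r"
  proof (rule transI, clarify)
    fix i j k assume ijk: "i \<in> {1..n}" "j \<in> {1..n}" "k \<in> {1..n}"
      and ij: "rows_swap_invariant n M i j" and jk: "rows_swap_invariant n M j k"
    show "rows_swap_invariant n M i k"
    proof (cases "i = k \<or> i = j \<or> j = k")
      case True then show ?thesis using ij jk by (auto simp: rows_swap_invariant_def)
    next
      case False
      then have "transpose i k = transpose i j \<circ> transpose j k \<circ> transpose i j"
        using transpose_comp_triple[of i k j] by auto
      then have conj: "transpose i k ` x = transpose i j ` transpose j k ` transpose i j ` x" for x
        by (simp add: image_comp)
      show ?thesis unfolding rows_swap_invariant_def
      proof (intro ballI)
        fix x y assume x: "x \<in> basis_idx n" and y: "y \<in> basis_idx n"
        have x1: "transpose i j ` x \<in> basis_idx n"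
          using transpose_image_in_basis_idx[OF ijk(1,2) x] .
        have x2: "transpose j k ` transpose i j ` x \<in> basis_idx n"
          using transpose_image_in_basis_idx[OF ijk(2,3) x1] .
        have "M (transpose i k ` x) y = M (transpose j k ` transpose i j ` x) y"
          using ij x2 y unfolding conj rows_swap_invariant_def by blast
        also have "\<dots> = M (transpose i j ` x) y" using jk x1 y unfolding rows_swap_invariant_def by blast
        also have "\<dots> = M x y" using ij x y unfolding rows_swap_invariant_def by blast
        finally show "M (transpose i k ` x) y = M x y" .
      qed
    qed
  qed
qed auto

lemma hypergraph_connected_equiv_total:
  assumes conn: "hypergraph_connected n \<SS>" and eq: "equiv {1..n} r"
    and edges: "\<forall>S\<in>\<SS>. S \<times> S \<subseteq> r"
  shows "r = {1..n} \<times> {1..n}"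
proof -
  have classes: "r `` {i} = {1..n}" if i: "i \<in> {1..n}" for i
  proof (rule ccontr)
    assume "r `` {i} \<noteq> {1..n}"
    moreover have "r `` {i} \<subseteq> {1..n}" "i \<in> r `` {i}"
      using eq i by (auto simp: equiv_def refl_on_def)
    ultimately obtain S where "S \<in> \<SS>" "S \<inter> r `` {i} \<noteq> {}" "S \<inter> ({1..n} - r `` {i}) \<noteq> {}"
      using conn[unfolded hypergraph_connected_def, rule_format, of "r `` {i}" "{1..n} - r `` {i}"]
      by blast
    then obtain k l where "(i, k) \<in> r" "(k, l) \<in> r" "l \<notin> r `` {i}"
      using edges by blast
    then show False using eq by (auto simp: equiv_def dest: transD)
  qed
  show ?thesis
  proof
    show "r \<subseteq> {1..n} \<times> {1..n}" using eq by (simp add: equiv_def)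
    show "{1..n} \<times> {1..n} \<subseteq> r" using classes by blast
  qed
qed

theorem mainTheorem13:
  fixes n :: nat and \<rho> \<sigma> :: qop and \<SS> :: "nat set set"
  assumes "symmetric_state n \<rho>"
    and "\<forall>S\<in>\<SS>. S \<subseteq> {1..n}"
    and "hypergraph_connected n \<SS>"
    and "\<sigma> \<in> compatible_states n \<rho> \<SS>"
  shows "symmetric_state n \<sigma>"
proof -
  let ?r = "{(i, j). i \<in> {1..n} \<and> j \<in> {1..n} \<and> rows_swap_invariant n \<sigma> i j}"
  have ds: "density_matrix n \<sigma>"
    and marginals: "\<forall>S\<in>\<SS>. \<forall>a\<in>Pow S. \<forall>b\<in>Pow S. partial_trace n S \<sigma> a b = partial_trace n S \<rho> a b"
    using assms(4) unfolding compatible_states_def by blast+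
  have "S \<times> S \<subseteq> ?r" if "S \<in> \<SS>" for S
  proof (clarify)
    fix i j assume ij: "i \<in> S" "j \<in> S"
    have S: "S \<subseteq> {1..n}" using assms(2) that by blast
    have "rows_swap_invariant n \<sigma> i j"
      using rows_swap_invariant_of_marginal[OF assms(1) ds S ij bspec[OF marginals that]] .
    then show "i \<in> {1..n} \<and> j \<in> {1..n} \<and> rows_swap_invariant n \<sigma> i j" using S ij by blast
  qed
  then have "?r = {1..n} \<times> {1..n}"
    using hypergraph_connected_equiv_total[OF assms(3) equiv_rows_swap_invariant] by blast
  then have "\<forall>i\<in>{1..n}. \<forall>j\<in>{1..n}. rows_swap_invariant n \<sigma> i j" by blast
  then show ?thesis
    using ds symmetric_state_iff_rows_swap_invariant by blast
qed

end
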